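(* Let $(q_k,p_{k1},p_{k2})_{k\ge2}$ be real numbers with $q_k>0$, $p_{k1}\ge0$, $p_{k2}>0$ and $q_k+p_{k1}+p_{k2}=1$ for all $k\ge2$, and let $Y$ be the (1,2) random walk defined in the context. For $1\le m<k<n$, $$Q_k^n(m,n)=\sum_{s=m+1}^k\mathbf e_1A_s\cdots A_{n-1}\left(\frac{1+\sum_{s=m+1}^{n-1}\mathbf e_1A_s\cdots A_{n-1}\mathbf e_2^t}{1+\sum_{s=m+1}^{n-1}\mathbf e_1A_s\cdots A_{n-1}\mathbf e_1^t}\mathbf e_1^t-\mathbf e_2^t\right),$$ $$Q_k^{n+1}(m,n)=\sum_{s=m+1}^k\mathbf e_1A_s\cdots A_{n-1}\left(\mathbf e_2^t-\frac{\sum_{s=m+1}^{n-1}\mathbf e_1A_s\cdots A_{n-1}\mathbf e_2^t}{1+\sum_{s=m+1}^{n-1}\mathbf e_1A_s\cdots A_{n-1}\mathbf e_1^t}\mathbf e_1^t\right),$$ $$Q_k(m,n,+)=\frac{\sum_{s=m+1}^k\mathbf e_1A_s\cdots A_{n-1}\mathbf e_1^t}{1+\sum_{s=m+1}^{n-1}\mathbf e_1A_s\cdots A_{n-1}\mathbf e_1^t}.$$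
   Context: The (1,2) random walk $Y$ is the Markov chain on $\mathbb Z_+=\{0,1,2,\dots\}$ with $P(Y_{k+1}=0\mid Y_k=1)=P(Y_{k+1}=2\mid Y_k=0)=1$ and, for $n\ge2$, $P(Y_{k+1}=n-1\mid Y_k=n)=q_n$, $P(Y_{k+1}=n+1\mid Y_k=n)=p_{n1}$, $P(Y_{k+1}=n+2\mid Y_k=n)=p_{n2}$. For $k\ge2$, $a_k=(p_{k1}+p_{k2})/q_k$, $b_k=p_{k2}/q_k$, $A_k=\begin{pmatrix}a_k&b_k\\1&0\end{pmatrix}$; $\mathbf e_1=(1,0)$, $\mathbf e_2=(0,1)$, $^t$ denotes transpose. For $m\le k\le n+1$ and $j\in\{n,n+1\}$, $Q_k^j(m,n)$ is the probability, for $Y$ started at $Y_0=k$, that $Y$ hits $[n,\infty)$ before hitting $[0,m]$ and first enters $[n,\infty)$ at the site $j$; $Q_k(m,n,+)=Q_k^n(m,n)+Q_k^{n+1}(m,n)$ is the probability, starting from $k$, that $Y$ hits $[n,\infty)$ before $[0,m]$. *)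

theory Defs
  imports "HOL-Analysis.Analysis"
begin

text \<open>One-step transition probabilities of the (1,2) random walk on the nonnegative integers,
  with parameters q k, p1 k (= p_{k1}), p2 k (= p_{k2}) for k >= 2.\<close>
definition trans12 :: "(nat \<Rightarrow> real) \<Rightarrow> (nat \<Rightarrow> real) \<Rightarrow> (nat \<Rightarrow> real) \<Rightarrow> nat \<Rightarrow> nat \<Rightarrow> real" where
  "trans12 q p1 p2 x y =
     (if x = 0 then (if y = 2 then 1 else 0)
      else if x = 1 then (if y = 0 then 1 else 0)
      else if y = x - 1 then q x
      else if y = x + 1 then p1 x
      else if y = x + 2 then p2 x
      else 0)"

fun path_prob :: "(nat \<Rightarrow> real) \<Rightarrow> (nat \<Rightarrow> real) \<Rightarrow> (nat \<Rightarrow> real) \<Rightarrow> nat \<Rightarrow> nat list \<Rightarrow> real" where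
  "path_prob q p1 p2 x [] = 1"
| "path_prob q p1 p2 x (y # ys) = trans12 q p1 p2 x y * path_prob q p1 p2 y ys"

text \<open>Event on a trajectory ys = (Y_0, Y_1, ...): Y hits [n,oo) before [0,m], and the first
  entrance into [n,oo) happens at site j.\<close>
definition exit_at :: "nat \<Rightarrow> nat \<Rightarrow> nat \<Rightarrow> nat list \<Rightarrow> bool" where
  "exit_at m n j ys \<longleftrightarrow>
     (\<exists>i < length ys. ys ! i = j \<and> n \<le> ys ! i \<and> (\<forall>l < i. m < ys ! l \<and> ys ! l < n))"

text \<open>Probability, starting at k, that the event occurs within the first t steps. All trajectories
  of positive probability of length t started at k stay in {0..k+2t}.\<close>
definition Qfin :: "(nat \<Rightarrow> real) \<Rightarrow> (nat \<Rightarrow> real) \<Rightarrow> (nat \<Rightarrow> real) \<Rightarrow> nat \<Rightarrow> nat \<Rightarrow> nat \<Rightarrow> nat \<Rightarrow> nat \<Rightarrow> real" where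
  "Qfin q p1 p2 j m n k t =
     (\<Sum>xs \<in> {xs. length xs = t \<and> set xs \<subseteq> {0..k + 2 * t}}.
        (if exit_at m n j (k # xs) then path_prob q p1 p2 k xs else 0))"

text \<open>Q_k^j(m,n): the probability of the (increasing) union over t of these events.\<close>
definition Qj :: "(nat \<Rightarrow> real) \<Rightarrow> (nat \<Rightarrow> real) \<Rightarrow> (nat \<Rightarrow> real) \<Rightarrow> nat \<Rightarrow> nat \<Rightarrow> nat \<Rightarrow> nat \<Rightarrow> real" where
  "Qj q p1 p2 j m n k = lim (\<lambda>t. Qfin q p1 p2 j m n k t)"

definition Qplus :: "(nat \<Rightarrow> real) \<Rightarrow> (nat \<Rightarrow> real) \<Rightarrow> (nat \<Rightarrow> real) \<Rightarrow> nat \<Rightarrow> nat \<Rightarrow> nat \<Rightarrow> real" where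
  "Qplus q p1 p2 m n k = Qj q p1 p2 n m n k + Qj q p1 p2 (n + 1) m n k"

definition Amat :: "(nat \<Rightarrow> real) \<Rightarrow> (nat \<Rightarrow> real) \<Rightarrow> (nat \<Rightarrow> real) \<Rightarrow> nat \<Rightarrow> real^2^2" where
  "Amat q p1 p2 k =
     (let a = (p1 k + p2 k) / q k; b = p2 k / q k in
      vector [vector [a, b], vector [1, 0]])"

definition Aprod :: "(nat \<Rightarrow> real) \<Rightarrow> (nat \<Rightarrow> real) \<Rightarrow> (nat \<Rightarrow> real) \<Rightarrow> nat \<Rightarrow> nat \<Rightarrow> real^2^2" where
  "Aprod q p1 p2 s n = foldr (\<lambda>i M. Amat q p1 p2 i ** M) [s..<n] (mat 1)"

definition E11 :: "(nat \<Rightarrow> real) \<Rightarrow> (nat \<Rightarrow> real) \<Rightarrow> (nat \<Rightarrow> real) \<Rightarrow> nat \<Rightarrow> nat \<Rightarrow> real" where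
  "E11 q p1 p2 s n = Aprod q p1 p2 s n $ 1 $ 1"

definition E12 :: "(nat \<Rightarrow> real) \<Rightarrow> (nat \<Rightarrow> real) \<Rightarrow> (nat \<Rightarrow> real) \<Rightarrow> nat \<Rightarrow> nat \<Rightarrow> real" where
  "E12 q p1 p2 s n = Aprod q p1 p2 s n $ 1 $ 2"

end

theory Submission
  imports Defs
begin

(* For j \<in> {n, n+1}, the probability of exiting at j within t steps satisfies the backward
   recursion of the walk; it increases with t, so its limit Q^j(m,n) is harmonic on ]m,n[ and
   equals the indicator of j at m, n and n+1. A maximum principle makes such a function unique.
   Harmonic functions vanishing at m are F(x) = c_{m+1} + ... + c_x with
   q_x c_x = (p_{x1} + p_{x2}) c_{x+1} + p_{x2} c_{x+2}, i.e. (c_x, c_{x+1})^t = A_x (c_{x+1}, c_{x+2})^t,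
   so c_s = e_1 A_s ... A_{n-1} v^t, and the boundary values at n and n+1 determine v. *)

lemma exit_at_Nil [simp]: "\<not> exit_at m n j []"
  by (simp add: exit_at_def)

lemma exit_at_Cons [simp]:
  "exit_at m n j (x # xs) \<longleftrightarrow> x = j \<and> n \<le> x \<or> m < x \<and> x < n \<and> exit_at m n j xs"
  unfolding exit_at_def by (auto simp: Ex_less_Suc2 All_less_Suc2)

lemma sum_lists_length_Suc:
  assumes "finite A"
  shows "(\<Sum>xs\<in>{xs. length xs = Suc t \<and> set xs \<subseteq> A}. f xs) =
         (\<Sum>y\<in>A. \<Sum>ys\<in>{ys. length ys = t \<and> set ys \<subseteq> A}. f (y # ys))"
proof -
  have fin: "finite {ys. set ys \<subseteq> A \<and> length ys = t}"
    using assms by (rule finite_lists_length_eq)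
  have "{xs. length xs = Suc t \<and> set xs \<subseteq> A} =
      (\<lambda>(ys, y). y # ys) ` ({ys. set ys \<subseteq> A \<and> length ys = t} \<times> A)"
    using lists_length_Suc_eq by (simp add: conj_commute)
  then show ?thesis
    using assms fin
    by (simp add: sum.reindex inj_split_Cons sum.cartesian_product' conj_commute sum.swap[of _ A])
qed

lemma trans12_cong:
  assumes "\<And>y. y \<le> x + 2 \<Longrightarrow> f y = g y"
  shows "(\<Sum>y\<in>A. trans12 q p1 p2 x y * f y) = (\<Sum>y\<in>A. trans12 q p1 p2 x y * g y)"
  using assms by (intro sum.cong) (auto simp: trans12_def)

lemma sum_trans12_interior:
  assumes "2 \<le> x" "x + 2 \<le> B"
  shows "(\<Sum>y\<in>{0..B}. trans12 q p1 p2 x y * f y) =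
    q x * f (x - 1) + p1 x * f (x + 1) + p2 x * f (x + 2)"
proof -
  have "trans12 q p1 p2 x y * f y = (if y = x - 1 then q x * f (x - 1) else 0)
     + (if y = x + 1 then p1 x * f (x + 1) else 0) + (if y = x + 2 then p2 x * f (x + 2) else 0)" for y
    using assms(1) by (auto simp: trans12_def)
  then show ?thesis
    using assms by (simp add: sum.distrib)
qed

lemma Aprod_self [simp]: "Aprod q p1 p2 n n = mat 1"
  by (simp add: Aprod_def)

lemma Aprod_rows:
  assumes "s < n"
  shows "Aprod q p1 p2 s n $ 1 $ i = (p1 s + p2 s) / q s * Aprod q p1 p2 (s + 1) n $ 1 $ i
            + p2 s / q s * Aprod q p1 p2 (s + 1) n $ 2 $ i"
    and "Aprod q p1 p2 s n $ 2 $ i = Aprod q p1 p2 (s + 1) n $ 1 $ i"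
proof -
  have "Aprod q p1 p2 s n = Amat q p1 p2 s ** Aprod q p1 p2 (s + 1) n"
    using assms by (simp add: Aprod_def upt_conv_Cons)
  then show "Aprod q p1 p2 s n $ 1 $ i = (p1 s + p2 s) / q s * Aprod q p1 p2 (s + 1) n $ 1 $ i
            + p2 s / q s * Aprod q p1 p2 (s + 1) n $ 2 $ i"
    and "Aprod q p1 p2 s n $ 2 $ i = Aprod q p1 p2 (s + 1) n $ 1 $ i"
    by (simp_all add: matrix_matrix_mult_def sum_2 Amat_def Let_def)
qed

locale walk12 =
  fixes q p1 p2 :: "nat \<Rightarrow> real"
  assumes q_pos: "2 \<le> x \<Longrightarrow> 0 < q x"
    and p1_nonneg: "2 \<le> x \<Longrightarrow> 0 \<le> p1 x"
    and p2_pos: "2 \<le> x \<Longrightarrow> 0 < p2 x"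
    and probs_sum: "2 \<le> x \<Longrightarrow> q x + p1 x + p2 x = 1"
begin

lemma sum_trans12_eq_1:
  assumes "x + 2 \<le> B"
  shows "(\<Sum>y\<in>{0..B}. trans12 q p1 p2 x y) = 1"
proof (cases "2 \<le> x")
  case True
  then show ?thesis
    using sum_trans12_interior[OF True assms, of q p1 p2 "\<lambda>_. 1"] probs_sum by simp
next
  case False
  then have "x = 0 \<or> x = 1"
    by auto
  then show ?thesis
    using assms by (auto simp: trans12_def)
qed

lemma sum_path_prob_eq_1:
  "x + 2 * t \<le> B \<Longrightarrow>
    (\<Sum>xs\<in>{xs. length xs = t \<and> set xs \<subseteq> {0..B}}. path_prob q p1 p2 x xs) = 1"
proof (induction t arbitrary: x)
  case 0
  have "{xs. length xs = 0 \<and> set xs \<subseteq> {0..B}} = {[]}"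
    by auto
  then show ?case
    by simp
next
  case (Suc t)
  have "(\<Sum>xs\<in>{xs. length xs = Suc t \<and> set xs \<subseteq> {0..B}}. path_prob q p1 p2 x xs)
      = (\<Sum>y\<in>{0..B}. trans12 q p1 p2 x y *
          (\<Sum>ys\<in>{ys. length ys = t \<and> set ys \<subseteq> {0..B}}. path_prob q p1 p2 y ys))"
    by (simp add: sum_lists_length_Suc sum_distrib_left)
  also have "\<dots> = (\<Sum>y\<in>{0..B}. trans12 q p1 p2 x y * 1)"
    using Suc by (intro trans12_cong) simp
  finally show ?case
    using sum_trans12_eq_1 Suc.prems by simp
qed

definition step_mean :: "(nat \<Rightarrow> real) \<Rightarrow> nat \<Rightarrow> real" where
  "step_mean f x = q x * f (x - 1) + p1 x * f (x + 1) + p2 x * f (x + 2)"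

definition harmonic_between :: "nat \<Rightarrow> nat \<Rightarrow> (nat \<Rightarrow> real) \<Rightarrow> bool" where
  "harmonic_between m n f \<longleftrightarrow> (\<forall>x. m < x \<longrightarrow> x < n \<longrightarrow> f x = step_mean f x)"

lemma step_mean_mono: "2 \<le> x \<Longrightarrow> (\<And>y. f y \<le> g y) \<Longrightarrow> step_mean f x \<le> step_mean g x"
  unfolding step_mean_def
  by (intro add_mono mult_left_mono) (auto simp: q_pos p1_nonneg p2_pos less_imp_le)

lemma step_mean_const: "2 \<le> x \<Longrightarrow> step_mean (\<lambda>_. c) x = c"
  using probs_sum[of x] by (simp add: step_mean_def flip: distrib_right)

fun hit_within :: "nat \<Rightarrow> nat \<Rightarrow> nat \<Rightarrow> nat \<Rightarrow> nat \<Rightarrow> real" where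
  "hit_within j m n 0 x = (if x = j then 1 else 0)"
| "hit_within j m n (Suc t) x =
     (if m < x \<and> x < n then step_mean (hit_within j m n t) x else if x = j then 1 else 0)"

lemma exit_sum_eq_hit_within:
  assumes "1 \<le> m" "n \<le> j"
  shows "x + 2 * t \<le> B \<Longrightarrow>
    (\<Sum>xs\<in>{xs. length xs = t \<and> set xs \<subseteq> {0..B}}.
       if exit_at m n j (x # xs) then path_prob q p1 p2 x xs else 0) = hit_within j m n t x"
proof (induction t arbitrary: x)
  case 0
  have "{xs. length xs = 0 \<and> set xs \<subseteq> {0..B}} = {[]}"
    by auto
  then show ?case
    using assms by simp
next
  case (Suc t)
  consider "m < x \<and> x < n" | "x = j" | "\<not> (m < x \<and> x < n)" "x \<noteq> j"
    by blast
  then show ?case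
  proof cases
    case 1
    then have "x \<noteq> j" "2 \<le> x"
      using assms by auto
    with 1 have "(\<Sum>xs\<in>{xs. length xs = Suc t \<and> set xs \<subseteq> {0..B}}.
          if exit_at m n j (x # xs) then path_prob q p1 p2 x xs else 0)
        = (\<Sum>y\<in>{0..B}. trans12 q p1 p2 x y * (\<Sum>ys\<in>{ys. length ys = t \<and> set ys \<subseteq> {0..B}}.
          if exit_at m n j (y # ys) then path_prob q p1 p2 y ys else 0))"
      by (simp add: sum_lists_length_Suc sum_distrib_left if_distrib[of "\<lambda>z. _ * z"] cong: if_cong)
    also have "\<dots> = (\<Sum>y\<in>{0..B}. trans12 q p1 p2 x y * hit_within j m n t y)"
      using Suc by (intro trans12_cong) simp
    finally show ?thesis
      using 1 \<open>2 \<le> x\<close> Suc.prems by (simp add: sum_trans12_interior step_mean_def)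
  next
    case 2
    then show ?thesis
      using assms sum_path_prob_eq_1 Suc.prems by simp
  qed auto
qed

lemma Qfin_eq_hit_within: "1 \<le> m \<Longrightarrow> n \<le> j \<Longrightarrow> Qfin q p1 p2 j m n k t = hit_within j m n t k"
  unfolding Qfin_def by (rule exit_sum_eq_hit_within) simp_all

lemma hit_within_outside: "\<not> (m < x \<and> x < n) \<Longrightarrow> hit_within j m n t x = (if x = j then 1 else 0)"
  by (cases t) auto

lemma hit_within_bounds:
  assumes "1 \<le> m"
  shows "0 \<le> hit_within j m n t x \<and> hit_within j m n t x \<le> 1"
proof (induction t arbitrary: x)
  case (Suc t)
  show ?case
  proof (cases "m < x \<and> x < n")
    case True
    then have "2 \<le> x"
      using assms by simp
    then have "step_mean (\<lambda>_. 0) x \<le> step_mean (hit_within j m n t) x"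
      and "step_mean (hit_within j m n t) x \<le> step_mean (\<lambda>_. 1) x"
      using Suc.IH by (blast intro: step_mean_mono)+
    then show ?thesis
      using True \<open>2 \<le> x\<close> by (simp add: step_mean_const)
  qed (simp del: hit_within.simps add: hit_within_outside)
qed simp

lemma hit_within_mono:
  assumes "1 \<le> m" "n \<le> j"
  shows "hit_within j m n t x \<le> hit_within j m n (Suc t) x"
proof (induction t arbitrary: x)
  case 0
  then show ?case
    using assms hit_within_bounds[of m j n "Suc 0" x] by (cases "m < x \<and> x < n") auto
next
  case (Suc t)
  show ?case
  proof (cases "m < x \<and> x < n")
    case True
    then have "2 \<le> x"
      using assms by simp
    then have "step_mean (hit_within j m n t) x \<le> step_mean (hit_within j m n (Suc t)) x"
      using Suc.IH by (rule step_mean_mono)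
    then show ?thesis
      using True by (simp del: hit_within.simps add: hit_within.simps(2))
  qed (simp del: hit_within.simps add: hit_within_outside)
qed

lemma hit_within_LIMSEQ:
  assumes "1 \<le> m" "n \<le> j"
  shows "(\<lambda>t. hit_within j m n t x) \<longlonglongrightarrow> Qj q p1 p2 j m n x"
proof -
  have "incseq (\<lambda>t. hit_within j m n t x)"
    using hit_within_mono[OF assms] by (simp add: incseq_SucI)
  then have "convergent (\<lambda>t. hit_within j m n t x)"
    using hit_within_bounds[OF assms(1)] by (blast intro: incseq_convergent convergentI)
  moreover have "Qj q p1 p2 j m n x = lim (\<lambda>t. hit_within j m n t x)"
    using Qfin_eq_hit_within[OF assms] by (simp add: Qj_def)
  ultimately show ?thesis
    by (simp add: convergent_LIMSEQ_iff)
qed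

lemma Qj_outside:
  "1 \<le> m \<Longrightarrow> n \<le> j \<Longrightarrow> \<not> (m < x \<and> x < n) \<Longrightarrow>
    Qj q p1 p2 j m n x = (if x = j then 1 else 0)"
  using hit_within_LIMSEQ[of m n j x] by (simp add: hit_within_outside LIMSEQ_const_iff)

lemma Qj_harmonic:
  assumes "1 \<le> m" "n \<le> j"
  shows "harmonic_between m n (Qj q p1 p2 j m n)"
  unfolding harmonic_between_def
proof (intro allI impI)
  fix x
  assume "m < x" "x < n"
  then have "(\<lambda>t. hit_within j m n (Suc t) x) = (\<lambda>t. step_mean (hit_within j m n t) x)"
    by simp
  moreover have "(\<lambda>t. step_mean (hit_within j m n t) x) \<longlonglongrightarrow> step_mean (Qj q p1 p2 j m n) x"
    unfolding step_mean_def by (intro tendsto_intros hit_within_LIMSEQ[OF assms])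
  moreover have "(\<lambda>t. hit_within j m n (Suc t) x) \<longlonglongrightarrow> Qj q p1 p2 j m n x"
    using hit_within_LIMSEQ[OF assms] by (rule LIMSEQ_Suc)
  ultimately show "Qj q p1 p2 j m n x = step_mean (Qj q p1 p2 j m n) x"
    using LIMSEQ_unique by metis
qed

lemma harmonic_between_diff:
  "harmonic_between m n f \<Longrightarrow> harmonic_between m n g \<Longrightarrow> harmonic_between m n (\<lambda>x. f x - g x)"
  by (simp add: harmonic_between_def step_mean_def algebra_simps)

lemma harmonic_between_eq_0:
  assumes "1 \<le> m" and harm: "harmonic_between m n D"
    and bdry: "D m = 0" "D n = 0" "D (n + 1) = 0"
    and "m < x0" "x0 < n"
  shows "D x0 = 0"
proof (rule ccontr)
  assume "D x0 \<noteq> 0"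
  define M where "M = Max ((\<lambda>y. \<bar>D y\<bar>) ` {m<..<n})"
  have le_M: "\<bar>D y\<bar> \<le> M" if "m < y" "y < n" for y
    using that by (simp add: M_def)
  then have "0 < M"
    using \<open>D x0 \<noteq> 0\<close> le_M[OF assms(6,7)] by linarith
  have le_M': "\<bar>D y\<bar> \<le> M" if "m \<le> y" "y \<le> n + 1" for y
  proof (cases "m < y \<and> y < n")
    case False
    then have "y = m \<or> y = n \<or> y = n + 1"
      using that by linarith
    then show ?thesis
      using bdry \<open>0 < M\<close> by auto
  qed (use le_M in blast)
  define X where "X = {y \<in> {m<..<n}. \<bar>D y\<bar> = M}"
  have "M \<in> (\<lambda>y. \<bar>D y\<bar>) ` {m<..<n}"
    unfolding M_def using assms(6,7) by (intro Max_in) auto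
  then have X: "finite X" "X \<noteq> {}"
    unfolding X_def by (auto intro: finite_subset[of _ "{m<..<n}"])
  \<comment> \<open>At the rightmost point where |D| is maximal, the jump to x + 2, which has positive
    probability, lands where |D| is strictly smaller.\<close>
  define x where "x = Max X"
  have x: "m < x" "x < n" "\<bar>D x\<bar> = M"
    using Max_in[OF X] unfolding x_def X_def by auto
  have "\<bar>D (x + 2)\<bar> < M"
  proof (cases "x + 2 < n")
    case True
    have "x + 2 \<notin> X"
      using Max_ge[OF X(1), of "x + 2"] unfolding x_def[symmetric] by auto
    then have "\<bar>D (x + 2)\<bar> \<noteq> M"
      using True x(1) unfolding X_def by auto
    then show ?thesis
      using le_M[of "x + 2"] x(1) True by simp
  next
    case False
    then have "x + 2 = n \<or> x + 2 = n + 1"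
      using x(2) by linarith
    then show ?thesis
      using bdry \<open>0 < M\<close> by auto
  qed
  have "2 \<le> x"
    using assms(1) x(1) by simp
  have "D x = step_mean D x"
    using harm x(1,2) unfolding harmonic_between_def by blast
  then have "M = \<bar>q x * D (x - 1) + p1 x * D (x + 1) + p2 x * D (x + 2)\<bar>"
    using x(3) by (simp add: step_mean_def)
  also have "\<dots> \<le> \<bar>q x * D (x - 1)\<bar> + \<bar>p1 x * D (x + 1)\<bar> + \<bar>p2 x * D (x + 2)\<bar>"
    using abs_triangle_ineq[of "q x * D (x - 1) + p1 x * D (x + 1)" "p2 x * D (x + 2)"]
      abs_triangle_ineq[of "q x * D (x - 1)" "p1 x * D (x + 1)"] by linarith
  also have "\<dots> = q x * \<bar>D (x - 1)\<bar> + p1 x * \<bar>D (x + 1)\<bar> + p2 x * \<bar>D (x + 2)\<bar>"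
    using \<open>2 \<le> x\<close> q_pos p1_nonneg p2_pos by (simp add: abs_mult less_imp_le)
  also have "\<dots> < q x * M + p1 x * M + p2 x * M"
  proof -
    have "q x * \<bar>D (x - 1)\<bar> \<le> q x * M" "p1 x * \<bar>D (x + 1)\<bar> \<le> p1 x * M"
      using \<open>2 \<le> x\<close> x(1,2) le_M'[of "x - 1"] le_M'[of "x + 1"]
      by (simp_all add: mult_left_mono q_pos p1_nonneg less_imp_le)
    moreover have "p2 x * \<bar>D (x + 2)\<bar> < p2 x * M"
      using \<open>2 \<le> x\<close> \<open>\<bar>D (x + 2)\<bar> < M\<close> p2_pos by simp
    ultimately show ?thesis
      by linarith
  qed
  also have "\<dots> = M"
    using probs_sum[OF \<open>2 \<le> x\<close>] by (simp flip: distrib_right)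
  finally show False
    by simp
qed

lemma Qj_eq_harmonic:
  assumes "1 \<le> m" "n \<le> j" "harmonic_between m n F"
    and "F m = 0" "F n = (if n = j then 1 else 0)" "F (n + 1) = (if n + 1 = j then 1 else 0)"
    and "m < x" "x < n"
  shows "Qj q p1 p2 j m n x = F x"
proof -
  have harm: "harmonic_between m n (\<lambda>y. Qj q p1 p2 j m n y - F y)"
    using assms(1-3) by (intro harmonic_between_diff Qj_harmonic)
  have bdry: "Qj q p1 p2 j m n m = 0" "Qj q p1 p2 j m n n = (if n = j then 1 else 0)"
    "Qj q p1 p2 j m n (n + 1) = (if n + 1 = j then 1 else 0)"
    using Qj_outside[OF assms(1,2)] assms(2,7,8) by simp_all
  have "(\<lambda>y. Qj q p1 p2 j m n y - F y) x = 0"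
    by (rule harmonic_between_eq_0[OF assms(1) harm]) (use bdry assms(4-8) in simp_all)
  then show ?thesis
    by simp
qed

lemma Aprod_nonneg: "2 \<le> s \<Longrightarrow> 0 \<le> Aprod q p1 p2 s n $ a $ b"
proof (induction "n - s" arbitrary: s a b)
  case 0
  then have "Aprod q p1 p2 s n = mat 1"
    by (simp add: Aprod_def)
  then show ?case
    by (simp add: mat_def)
next
  case (Suc d)
  then have "s < n" and IH: "0 \<le> Aprod q p1 p2 (s + 1) n $ a' $ b" for a'
    by simp_all
  then show ?case
    using Suc.prems exhaust_2[of a] Aprod_rows[OF \<open>s < n\<close>, of q p1 p2 b] IH[of 1] IH[of 2]
      q_pos[of s] p1_nonneg[of s] p2_pos[of s]
    by auto
qed

(* For s \<le> n, (incr n v1 v2 s, incr n v1 v2 (s + 1))^t = A_s \<cdots> A_{n-1} (v1, v2)^t;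
   the value v2 at s = n + 1 is what makes this hold for s = n. *)
definition incr :: "nat \<Rightarrow> real \<Rightarrow> real \<Rightarrow> nat \<Rightarrow> real" where
  "incr n v1 v2 s = (if s \<le> n then v1 * E11 q p1 p2 s n + v2 * E12 q p1 p2 s n else v2)"

definition incr_sum :: "nat \<Rightarrow> nat \<Rightarrow> real \<Rightarrow> real \<Rightarrow> nat \<Rightarrow> real" where
  "incr_sum m n v1 v2 x = (\<Sum>s = m + 1..x. incr n v1 v2 s)"

lemma incr_rec:
  assumes "x < n"
  shows "incr n v1 v2 x = (p1 x + p2 x) / q x * incr n v1 v2 (x + 1) + p2 x / q x * incr n v1 v2 (x + 2)"
proof (cases "x + 1 < n")
  case True
  then show ?thesis
    using assms Aprod_rows(1)[OF assms, of q p1 p2 1] Aprod_rows(1)[OF assms, of q p1 p2 2]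
      Aprod_rows(2)[OF True, of q p1 p2 1] Aprod_rows(2)[OF True, of q p1 p2 2]
    by (simp add: incr_def E11_def E12_def algebra_simps)
next
  case False
  then have "x + 1 = n"
    using assms by simp
  then show ?thesis
    using assms Aprod_rows(1)[OF assms, of q p1 p2 1] Aprod_rows(1)[OF assms, of q p1 p2 2]
    by (auto simp: incr_def E11_def E12_def mat_def algebra_simps)
qed

lemma incr_sum_harmonic:
  assumes "1 \<le> m"
  shows "harmonic_between m n (incr_sum m n v1 v2)"
  unfolding harmonic_between_def
proof (intro allI impI)
  fix x
  assume x: "m < x" "x < n"
  then have "2 \<le> x"
    using assms by simp
  let ?F = "incr_sum m n v1 v2" and ?c = "incr n v1 v2"
  have F: "?F x = ?F (x - 1) + ?c x" "?F (x + 1) = ?F x + ?c (x + 1)"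
    "?F (x + 2) = ?F (x + 1) + ?c (x + 2)"
    using x by (cases x; simp add: incr_sum_def)+
  have "q x * ?c x = (p1 x + p2 x) * ?c (x + 1) + p2 x * ?c (x + 2)"
    using incr_rec[OF x(2)] q_pos[OF \<open>2 \<le> x\<close>] by (simp add: field_simps)
  moreover have "step_mean ?F x = (q x + p1 x + p2 x) * ?F x
      - (q x * ?c x - (p1 x + p2 x) * ?c (x + 1) - p2 x * ?c (x + 2))"
    unfolding step_mean_def F by (simp add: algebra_simps)
  ultimately show "?F x = step_mean ?F x"
    using probs_sum[OF \<open>2 \<le> x\<close>] by simp
qed

lemma incr_sum_below:
  "k \<le> n \<Longrightarrow> incr_sum m n v1 v2 k = (\<Sum>s = m + 1..k. v1 * E11 q p1 p2 s n + v2 * E12 q p1 p2 s n)"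
  unfolding incr_sum_def incr_def by (rule sum.cong) auto

lemma incr_sum_at_n:
  assumes "m < n"
  shows "incr_sum m n v1 v2 n =
      v1 * (1 + (\<Sum>s = m + 1..n - 1. E11 q p1 p2 s n)) + v2 * (\<Sum>s = m + 1..n - 1. E12 q p1 p2 s n)"
    and "incr_sum m n v1 v2 (n + 1) = incr_sum m n v1 v2 n + v2"
proof -
  have "{m + 1..n} = insert n {m + 1..n - 1}"
    using assms by auto
  then show "incr_sum m n v1 v2 n =
      v1 * (1 + (\<Sum>s = m + 1..n - 1. E11 q p1 p2 s n)) + v2 * (\<Sum>s = m + 1..n - 1. E12 q p1 p2 s n)"
    using assms by (simp add: incr_sum_below E11_def E12_def mat_def sum.distrib sum_distrib_left algebra_simps)
  show "incr_sum m n v1 v2 (n + 1) = incr_sum m n v1 v2 n + v2"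
    using assms by (simp add: incr_sum_def incr_def)
qed

lemma Qj_eq_sum:
  assumes "1 \<le> m" "n \<le> j" "m < k" "k < n"
    and "incr_sum m n v1 v2 n = (if n = j then 1 else 0)"
    and "incr_sum m n v1 v2 (n + 1) = (if n + 1 = j then 1 else 0)"
  shows "Qj q p1 p2 j m n k = (\<Sum>s = m + 1..k. v1 * E11 q p1 p2 s n + v2 * E12 q p1 p2 s n)"
  using Qj_eq_harmonic[OF assms(1,2) incr_sum_harmonic[OF assms(1)]] assms incr_sum_below[of k n]
  by (simp add: incr_sum_def)

end

theorem lemma1:
  fixes q p1 p2 :: "nat \<Rightarrow> real" and m k n :: nat
  assumes "\<forall>i\<ge>2. q i > 0 \<and> p1 i \<ge> 0 \<and> p2 i > 0 \<and> q i + p1 i + p2 i = 1"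
    and "1 \<le> m" and "m < k" and "k < n"
  shows "Qj q p1 p2 n m n k =
           (\<Sum>s = m+1..k. E11 q p1 p2 s n *
              ((1 + (\<Sum>s = m+1..n-1. E12 q p1 p2 s n)) / (1 + (\<Sum>s = m+1..n-1. E11 q p1 p2 s n)))
              - E12 q p1 p2 s n) \<and>
         Qj q p1 p2 (n + 1) m n k =
           (\<Sum>s = m+1..k. E12 q p1 p2 s n -
              ((\<Sum>s = m+1..n-1. E12 q p1 p2 s n) / (1 + (\<Sum>s = m+1..n-1. E11 q p1 p2 s n)))
              * E11 q p1 p2 s n) \<and>
         Qplus q p1 p2 m n k =
           (\<Sum>s = m+1..k. E11 q p1 p2 s n) / (1 + (\<Sum>s = m+1..n-1. E11 q p1 p2 s n))"
proof -
  interpret walk12 q p1 p2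
    using assms(1) by unfold_locales simp_all
  define S11 where "S11 = (\<Sum>s = m + 1..n - 1. E11 q p1 p2 s n)"
  define S12 where "S12 = (\<Sum>s = m + 1..n - 1. E12 q p1 p2 s n)"
  have "0 \<le> S11"
    unfolding S11_def E11_def using assms(2) by (intro sum_nonneg Aprod_nonneg) auto
  then have "0 < 1 + S11"
    by simp
  have mn: "m < n"
    using assms by simp
  have Qn: "Qj q p1 p2 n m n k =
      (\<Sum>s = m + 1..k. (1 + S12) / (1 + S11) * E11 q p1 p2 s n + (- 1) * E12 q p1 p2 s n)"
    using assms(2-4) \<open>0 < 1 + S11\<close> incr_sum_at_n[OF mn]
    by (intro Qj_eq_sum) (simp_all add: S11_def S12_def)
  have Qn1: "Qj q p1 p2 (n + 1) m n k =
      (\<Sum>s = m + 1..k. (- S12 / (1 + S11)) * E11 q p1 p2 s n + 1 * E12 q p1 p2 s n)"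
    using assms(2-4) \<open>0 < 1 + S11\<close> incr_sum_at_n[OF mn]
    by (intro Qj_eq_sum) (simp_all add: S11_def S12_def)
  have "Qplus q p1 p2 m n k =
      (\<Sum>s = m + 1..k. ((1 + S12) / (1 + S11) - S12 / (1 + S11)) * E11 q p1 p2 s n)"
    unfolding Qplus_def Qn Qn1 sum.distrib[symmetric] by (intro sum.cong) (simp_all add: algebra_simps)
  also have "(1 + S12) / (1 + S11) - S12 / (1 + S11) = 1 / (1 + S11)"
    by (simp add: diff_divide_distrib[symmetric])
  finally show ?thesis
    using Qn Qn1 unfolding S11_def S12_def by (simp add: sum_divide_distrib algebra_simps)
qed

end
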